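(* For every preference profile $p\in\mathcal{P}$, the stabilizer $\mathrm{Stab}_{G^*}(p)=\{\varphi\in G^*: p^\varphi=p\}$ is a semiregular subgroup of $G^*$.
   Context: Fix $n\ge 2$, $W=\{1,\dots,n\}$, $M=\{n+1,\dots,2n\}$, $I=W\cup M$. Permutations compose right-to-left. A preference profile is a function $p$ on $I$ assigning to each $x\in W$ a linear order $p(x)$ on $M$ and to each $y\in M$ a linear order $p(y)$ on $W$; $\mathcal{P}$ is the set of preference profiles. $G^*=\{\varphi\in\mathrm{Sym}(I):\{\varphi(W),\varphi(M)\}=\{W,M\}\}$. For a linear order $R$ on $X\subseteq I$ and $\varphi\in\mathrm{Sym}(I)$, $\varphi R$ is the relation on $\varphi(X)$ with $(a,b)\in\varphi R$ iff $(\varphi^{-1}(a),\varphi^{-1}(b))\in R$. For $\varphi\in G^*$, $p^\varphi(z)=\varphi\,p(\varphi^{-1}(z))$. A subgroup $S\le\mathrm{Sym}(I)$ is semiregular if for every $z\in I$ the only element of $S$ fixing $z$ is the identity. *)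

theory Defs
  imports "HOL-Combinatorics.Permutations" "HOL-Algebra.Group"
begin

definition Wset :: "nat \<Rightarrow> nat set" where "Wset n = {1..n}"
definition Mset :: "nat \<Rightarrow> nat set" where "Mset n = {n+1..2*n}"
definition Iset :: "nat \<Rightarrow> nat set" where "Iset n = Wset n \<union> Mset n"

text \<open>Preference profiles: a function on I; each w in W gets a linear order on M,
  each m in M a linear order on W (values outside I are irrelevant).\<close>
definition profiles :: "nat \<Rightarrow> (nat \<Rightarrow> (nat \<times> nat) set) set" where
  "profiles n = {p. (\<forall>x\<in>Wset n. linear_order_on (Mset n) (p x)) \<and>
                     (\<forall>y\<in>Mset n. linear_order_on (Wset n) (p y))}"

definition Gstar :: "nat \<Rightarrow> (nat \<Rightarrow> nat) set" where
  "Gstar n = {\<phi>. \<phi> permutes Iset n \<and>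
                 {\<phi> ` Wset n, \<phi> ` Mset n} = {Wset n, Mset n}}"

definition Gstar_grp :: "nat \<Rightarrow> (nat \<Rightarrow> nat) monoid" where
  "Gstar_grp n = \<lparr>carrier = Gstar n, mult = (\<circ>), one = id\<rparr>"

definition rel_act :: "(nat \<Rightarrow> nat) \<Rightarrow> (nat \<times> nat) set \<Rightarrow> (nat \<times> nat) set" where
  "rel_act \<phi> R = {(a, b). (inv_into UNIV \<phi> a, inv_into UNIV \<phi> b) \<in> R}"

definition prof_act :: "(nat \<Rightarrow> (nat \<times> nat) set) \<Rightarrow> (nat \<Rightarrow> nat) \<Rightarrow> nat \<Rightarrow> (nat \<times> nat) set" where
  "prof_act p \<phi> z = rel_act \<phi> (p (inv_into UNIV \<phi> z))"

definition Stab :: "nat \<Rightarrow> (nat \<Rightarrow> (nat \<times> nat) set) \<Rightarrow> (nat \<Rightarrow> nat) set" where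
  "Stab n p = {\<phi> \<in> Gstar n. \<forall>z\<in>Iset n. prof_act p \<phi> z = p z}"

definition semiregular :: "nat \<Rightarrow> (nat \<Rightarrow> nat) set \<Rightarrow> bool" where
  "semiregular n S \<longleftrightarrow> (\<forall>z\<in>Iset n. \<forall>\<phi>\<in>S. \<phi> z = z \<longrightarrow> \<phi> = id)"

end

theory Submission
  imports Defs
begin

text \<open>A stabilising \<phi> is an automorphism of the profile. If \<phi> fixes some agent z, it cannot
  swap the two sides, so it maps the opposite side onto itself while preserving the linear order
  p(z) there; an automorphism of a finite linear order is the identity, so \<phi> fixes that side
  pointwise. Any agent on that side is now fixed, and the same argument applied to it fixes the
  side of z as well.\<close>

lemma linear_order_automorphism_fixes:
  assumes fin: "finite A" and lin: "linear_order_on A R" and bij: "bij_betw f A A"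
    and pres: "\<And>a b. a \<in> A \<Longrightarrow> b \<in> A \<Longrightarrow> (f a, f b) \<in> R \<longleftrightarrow> (a, b) \<in> R"
    and "a \<in> A"
  shows "f a = a"
proof -
  define lower where "lower x = {b \<in> A. (b, x) \<in> R}" for x
  define rank where "rank x = card (lower x)" for x
  have refl: "(x, x) \<in> R" if "x \<in> A" for x
    using lin that unfolding linear_order_on_def partial_order_on_def preorder_on_def refl_on_def
    by blast
  have "trans R" "antisym R" "total_on A R"
    using lin unfolding linear_order_on_def partial_order_on_def preorder_on_def by auto
  have rank_less: "rank x < rank y" if "x \<in> A" "y \<in> A" "x \<noteq> y" "(x, y) \<in> R" for x y
  proof -
    have "lower x \<subseteq> lower y"
      using \<open>trans R\<close> that unfolding lower_def trans_def by blast
    moreover have "y \<in> lower y - lower x"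
      using refl \<open>antisym R\<close> that unfolding lower_def antisym_def by blast
    ultimately show ?thesis
      unfolding rank_def using fin by (auto simp: lower_def intro: psubset_card_mono)
  qed
  have "inj_on rank A"
  proof (rule inj_onI, rule ccontr)
    fix x y assume "x \<in> A" "y \<in> A" "rank x = rank y" "x \<noteq> y"
    then show False
      using \<open>total_on A R\<close> rank_less[of x y] rank_less[of y x]
      unfolding total_on_def by auto
  qed
  moreover have "rank (f x) = rank x" if "x \<in> A" for x
  proof -
    have "f ` lower x = lower (f x)"
    proof
      show "f ` lower x \<subseteq> lower (f x)"
        using bij pres that unfolding lower_def bij_betw_def by auto
      show "lower (f x) \<subseteq> f ` lower x"
      proof
        fix c assume "c \<in> lower (f x)"
        moreover obtain b where "b \<in> A" "c = f b"
          using calculation bij unfolding lower_def bij_betw_def by auto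
        ultimately show "c \<in> f ` lower x"
          using pres that unfolding lower_def by auto
      qed
    qed
    moreover have "inj_on f (lower x)"
      using bij unfolding bij_betw_def lower_def by (auto intro: inj_on_subset)
    ultimately show ?thesis
      unfolding rank_def by (metis card_image)
  qed
  ultimately show ?thesis
    using \<open>a \<in> A\<close> bij by (meson bij_betwE inj_on_eq_iff)
qed

lemma rel_act_id: "rel_act id R = R"
  unfolding rel_act_def by simp

lemma rel_act_comp:
  assumes "bij f" "bij g"
  shows "rel_act (f \<circ> g) R = rel_act f (rel_act g R)"
  using assms unfolding rel_act_def by (auto simp: o_inv_distrib)

lemma rel_act_apply_iff:
  assumes "inj f"
  shows "(f a, f b) \<in> rel_act f R \<longleftrightarrow> (a, b) \<in> R"
  using assms unfolding rel_act_def by simp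

lemma Wset_Mset_disjoint: "Wset n \<inter> Mset n = {}"
  unfolding Wset_def Mset_def by auto

lemma GstarI:
  assumes "\<phi> permutes Iset n" "(`) \<phi> ` {Wset n, Mset n} = {Wset n, Mset n}"
  shows "\<phi> \<in> Gstar n"
  using assms unfolding Gstar_def by simp

lemma Gstar_permutes: "\<phi> \<in> Gstar n \<Longrightarrow> \<phi> permutes Iset n"
  unfolding Gstar_def by simp

lemma Gstar_image_sides: "\<phi> \<in> Gstar n \<Longrightarrow> (`) \<phi> ` {Wset n, Mset n} = {Wset n, Mset n}"
  unfolding Gstar_def by simp

lemma Gstar_bij: "\<phi> \<in> Gstar n \<Longrightarrow> bij \<phi>"
  using Gstar_permutes permutes_bij by blast

lemma Gstar_sides:
  assumes "\<phi> \<in> Gstar n"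
  shows "\<phi> ` Wset n = Wset n \<and> \<phi> ` Mset n = Mset n \<or> \<phi> ` Wset n = Mset n \<and> \<phi> ` Mset n = Wset n"
  using assms unfolding Gstar_def doubleton_eq_iff by simp

lemma id_in_Gstar: "id \<in> Gstar n"
  unfolding Gstar_def by simp

lemma image_comp_image: "(`) (f \<circ> g) ` S = (`) f ` (`) g ` S"
proof -
  have "(`) (f \<circ> g) = (`) f \<circ> (`) g"
    by (rule ext) (simp add: image_comp)
  then show ?thesis
    by (simp only: image_comp)
qed

lemma comp_in_Gstar:
  assumes "\<phi> \<in> Gstar n" "\<psi> \<in> Gstar n"
  shows "\<phi> \<circ> \<psi> \<in> Gstar n"
proof (rule GstarI)
  show "\<phi> \<circ> \<psi> permutes Iset n"
    using assms Gstar_permutes permutes_compose by blast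
  show "(`) (\<phi> \<circ> \<psi>) ` {Wset n, Mset n} = {Wset n, Mset n}"
    unfolding image_comp_image Gstar_image_sides[OF assms(2)] Gstar_image_sides[OF assms(1)] ..
qed

lemma inv_in_Gstar:
  assumes "\<phi> \<in> Gstar n"
  shows "inv_into UNIV \<phi> \<in> Gstar n"
proof (rule GstarI)
  have perm: "\<phi> permutes Iset n"
    using assms by (rule Gstar_permutes)
  then show "inv_into UNIV \<phi> permutes Iset n"
    by (rule permutes_inv)
  have "(`) (inv_into UNIV \<phi> \<circ> \<phi>) ` {Wset n, Mset n} = {Wset n, Mset n}"
    using permutes_inj[OF perm] by simp
  then show "(`) (inv_into UNIV \<phi>) ` {Wset n, Mset n} = {Wset n, Mset n}"
    unfolding image_comp_image Gstar_image_sides[OF assms] .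
qed

lemma group_Gstar_grp: "group (Gstar_grp n)"
proof (rule groupI)
  fix x assume "x \<in> carrier (Gstar_grp n)"
  then have "x \<in> Gstar n"
    by (simp add: Gstar_grp_def)
  moreover have "inv_into UNIV x \<circ> x = id"
    using Gstar_bij[OF \<open>x \<in> Gstar n\<close>] by (simp add: bij_is_inj)
  ultimately show "\<exists>y\<in>carrier (Gstar_grp n). y \<otimes>\<^bsub>Gstar_grp n\<^esub> x = \<one>\<^bsub>Gstar_grp n\<^esub>"
    using inv_in_Gstar[of x] unfolding Gstar_grp_def by auto
qed (simp_all add: Gstar_grp_def id_in_Gstar comp_in_Gstar o_assoc)

lemma Gstar_grp_inv:
  assumes "\<phi> \<in> Gstar n"
  shows "inv\<^bsub>Gstar_grp n\<^esub> \<phi> = inv_into UNIV \<phi>"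
proof (rule group.inv_equality[OF group_Gstar_grp])
  show "inv_into UNIV \<phi> \<otimes>\<^bsub>Gstar_grp n\<^esub> \<phi> = \<one>\<^bsub>Gstar_grp n\<^esub>"
    using Gstar_bij[OF assms] unfolding Gstar_grp_def by (simp add: bij_is_inj)
qed (use assms inv_in_Gstar[OF assms] in \<open>simp_all add: Gstar_grp_def\<close>)

text \<open>Stating stabilisation as equivariance avoids the inverse of \<phi> in prof_act.\<close>

lemma Stab_iff:
  "\<phi> \<in> Stab n p \<longleftrightarrow> \<phi> \<in> Gstar n \<and> (\<forall>z\<in>Iset n. p (\<phi> z) = rel_act \<phi> (p z))"
proof (cases "\<phi> \<in> Gstar n")
  case True
  then have perm: "\<phi> permutes Iset n"
    by (rule Gstar_permutes)
  have "(\<forall>z\<in>Iset n. prof_act p \<phi> z = p z) \<longleftrightarrow> (\<forall>z\<in>\<phi> ` Iset n. prof_act p \<phi> z = p z)"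
    by (simp add: permutes_image[OF perm])
  also have "\<dots> \<longleftrightarrow> (\<forall>z\<in>Iset n. p (\<phi> z) = rel_act \<phi> (p z))"
    using permutes_inj[OF perm] by (auto simp: prof_act_def)
  finally show ?thesis
    using True unfolding Stab_def by (simp only: mem_Collect_eq simp_thms)
next
  case False
  then show ?thesis
    unfolding Stab_def by blast
qed

lemma Stab_subgroup: "subgroup (Stab n p) (Gstar_grp n)"
proof (rule group.subgroupI[OF group_Gstar_grp])
  show "Stab n p \<subseteq> carrier (Gstar_grp n)"
    unfolding Stab_def Gstar_grp_def by auto
  have "id \<in> Stab n p"
    using id_in_Gstar by (simp add: Stab_iff rel_act_id)
  then show "Stab n p \<noteq> {}"
    by blast
next
  fix a b assume "a \<in> Stab n p" "b \<in> Stab n p"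
  then have "a \<in> Gstar n" "b \<in> Gstar n"
    and a: "\<forall>z\<in>Iset n. p (a z) = rel_act a (p z)" and b: "\<forall>z\<in>Iset n. p (b z) = rel_act b (p z)"
    unfolding Stab_iff by auto
  have "p (a (b z)) = rel_act (a \<circ> b) (p z)" if "z \<in> Iset n" for z
    using a b that \<open>b \<in> Gstar n\<close> Gstar_bij[OF \<open>a \<in> Gstar n\<close>] Gstar_bij[OF \<open>b \<in> Gstar n\<close>]
    by (simp add: rel_act_comp Gstar_permutes permutes_in_image)
  then show "a \<otimes>\<^bsub>Gstar_grp n\<^esub> b \<in> Stab n p"
    using comp_in_Gstar[OF \<open>a \<in> Gstar n\<close> \<open>b \<in> Gstar n\<close>]
    unfolding Stab_iff Gstar_grp_def by simp
next
  fix a assume "a \<in> Stab n p"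
  then have "a \<in> Gstar n" and a: "\<forall>z\<in>Iset n. p (a z) = rel_act a (p z)"
    unfolding Stab_iff by auto
  have "bij a" and perm: "a permutes Iset n"
    using \<open>a \<in> Gstar n\<close> by (rule Gstar_bij, rule Gstar_permutes)
  have "p (inv_into UNIV a z) = rel_act (inv_into UNIV a) (p z)" if "z \<in> Iset n" for z
  proof -
    have "inv_into UNIV a z \<in> Iset n"
      using permutes_in_image[OF permutes_inv[OF perm]] that by simp
    then have "p z = rel_act a (p (inv_into UNIV a z))"
      using a permutes_inverses(1)[OF perm] by metis
    then have "rel_act (inv_into UNIV a) (p z) = rel_act (inv_into UNIV a \<circ> a) (p (inv_into UNIV a z))"
      using \<open>bij a\<close> by (simp add: rel_act_comp bij_imp_bij_inv)
    then show ?thesis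
      using \<open>bij a\<close> by (simp add: bij_is_inj rel_act_id)
  qed
  then show "inv\<^bsub>Gstar_grp n\<^esub> a \<in> Stab n p"
    using inv_in_Gstar[OF \<open>a \<in> Gstar n\<close>] unfolding Gstar_grp_inv[OF \<open>a \<in> Gstar n\<close>] Stab_iff
    by simp
qed

lemma Gstar_fixed_point_preserves_sides:
  assumes "\<phi> \<in> Gstar n" "z \<in> Iset n" "\<phi> z = z"
  shows "\<phi> ` Wset n = Wset n \<and> \<phi> ` Mset n = Mset n"
proof -
  have "z \<in> \<phi> ` X \<longleftrightarrow> z \<in> X" for X
    using inj_image_mem_iff[OF bij_is_inj[OF Gstar_bij[OF assms(1)]]] assms(3) by metis
  then show ?thesis
    using Gstar_sides[OF assms(1)] Wset_Mset_disjoint[of n] \<open>z \<in> Iset n\<close>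
    unfolding Iset_def by blast
qed

lemma Stab_fixes_side:
  assumes "\<phi> \<in> Stab n p" "z \<in> Iset n" "\<phi> z = z"
    and "\<phi> ` B = B" "finite B" "linear_order_on B (p z)" "x \<in> B"
  shows "\<phi> x = x"
proof (rule linear_order_automorphism_fixes[where R = "p z"])
  have "inj \<phi>"
    using assms(1) Gstar_bij bij_is_inj unfolding Stab_def by blast
  then show "bij_betw \<phi> B B"
    using \<open>\<phi> ` B = B\<close> inj_on_subset[OF _ subset_UNIV] unfolding bij_betw_def by blast
  have "rel_act \<phi> (p z) = p z"
    using assms(1-3) unfolding Stab_iff by metis
  then show "(\<phi> a, \<phi> b) \<in> p z \<longleftrightarrow> (a, b) \<in> p z" for a b
    using rel_act_apply_iff[OF \<open>inj \<phi>\<close>] by metis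
qed (use assms in auto)

lemma Stab_semiregular:
  assumes "n \<ge> 1" and "p \<in> profiles n"
  shows "semiregular n (Stab n p)"
  unfolding semiregular_def
proof (intro ballI impI)
  fix z \<phi> assume "z \<in> Iset n" "\<phi> \<in> Stab n p" "\<phi> z = z"
  have "\<phi> \<in> Gstar n"
    using \<open>\<phi> \<in> Stab n p\<close> unfolding Stab_def by simp
  then have W_side: "\<phi> ` Wset n = Wset n" and M_side: "\<phi> ` Mset n = Mset n"
    using Gstar_fixed_point_preserves_sides \<open>z \<in> Iset n\<close> \<open>\<phi> z = z\<close> by blast+
  note fixes_side = Stab_fixes_side[OF \<open>\<phi> \<in> Stab n p\<close>]
  have W: "n \<in> Wset n" "finite (Wset n)" and M: "n + 1 \<in> Mset n" "finite (Mset n)"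
    using \<open>n \<ge> 1\<close> unfolding Wset_def Mset_def by auto
  have orders: "\<And>x. x \<in> Wset n \<Longrightarrow> linear_order_on (Mset n) (p x)"
    "\<And>y. y \<in> Mset n \<Longrightarrow> linear_order_on (Wset n) (p y)"
    using \<open>p \<in> profiles n\<close> unfolding profiles_def by auto
  have in_I: "Wset n \<subseteq> Iset n" "Mset n \<subseteq> Iset n"
    unfolding Iset_def by auto
  have "\<phi> x = x" if "x \<in> Iset n" for x
  proof (cases "z \<in> Wset n")
    case True
    then have "\<forall>y\<in>Mset n. \<phi> y = y"
      using fixes_side[OF \<open>z \<in> Iset n\<close> \<open>\<phi> z = z\<close> M_side M(2) orders(1)] by blast
    moreover from this have "\<forall>y\<in>Wset n. \<phi> y = y"
      using fixes_side[of "n + 1", OF _ _ W_side W(2) orders(2)] M(1) in_I by blast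
    ultimately show ?thesis
      using that unfolding Iset_def by blast
  next
    case False
    then have "z \<in> Mset n"
      using \<open>z \<in> Iset n\<close> unfolding Iset_def by blast
    then have "\<forall>y\<in>Wset n. \<phi> y = y"
      using fixes_side[OF \<open>z \<in> Iset n\<close> \<open>\<phi> z = z\<close> W_side W(2) orders(2)] by blast
    moreover from this have "\<forall>y\<in>Mset n. \<phi> y = y"
      using fixes_side[of n, OF _ _ M_side M(2) orders(1)] W(1) in_I by blast
    ultimately show ?thesis
      using that unfolding Iset_def by blast
  qed
  moreover have "\<phi> x = x" if "x \<notin> Iset n" for x
    using Gstar_permutes[OF \<open>\<phi> \<in> Gstar n\<close>] that by (rule permutes_not_in)
  ultimately show "\<phi> = id"
    by fastforce
qed

theorem theorem12:
  fixes n :: nat and p :: "nat \<Rightarrow> (nat \<times> nat) set"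
  assumes "n \<ge> 2" and "p \<in> profiles n"
  shows "subgroup (Stab n p) (Gstar_grp n) \<and> semiregular n (Stab n p)"
  using Stab_subgroup Stab_semiregular[of n p] assms by simp

end
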